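(* Let $(X,\le)$ be a globally hyperbolic poset. A formal interval is a map $x:\{1,2\}\to X$ with $x(1)\le x(2)$. The set of formal intervals, ordered by $x\sqsubseteq y$ iff $x(1)\le y(1)$ and $y(2)\le x(2)$, is a domain (continuous dcpo) order-isomorphic to $\mathbf{I}X$, the set $\{[a,b]: a\le b\}$ of closed intervals $[a,b]=\{z: a\le z\le b\}$ of $X$ ordered by reverse inclusion.
   Context: For a poset $(P,\sqsubseteq)$: a nonempty $S\subseteq P$ is directed if any two elements have an upper bound in $S$, filtered if any two have a lower bound in $S$; $\bigsqcup S$, $\bigwedge S$ denote supremum/infimum. $x\ll y$ iff for every directed $S$ with a supremum, $y\sqsubseteq\bigsqcup S$ implies $x\sqsubseteq s$ for some $s\in S$. $\Downarrow x=\{a:a\ll x\}$, $\Uparrow x=\{a:x\ll a\}$. $P$ is continuous if it has a subset $B$ such that for every $x$, $B\cap\Downarrow x$ contains a directed set with supremum $x$. A domain is a continuous poset in which every directed set has a supremum. A continuous poset is bicontinuous if (1) $x\ll y$ iff for every filtered $S$ having an infimum, $\bigwedge S\sqsubseteq x$ implies $s\sqsubseteq y$ for some $s\in S$; and (2) each $\Uparrow x$ is filtered with infimum $x$. The interval topology of a bicontinuous poset has basis the sets $\{z: a\ll z\ll b\}$. A globally hyperbolic poset is a bicontinuous poset in which every closed interval $[a,b]$ is compact in the interval topology. *)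

theory Defs
  imports "HOL-Analysis.Analysis"
begin

definition partial_order_on' :: "'a set \<Rightarrow> ('a \<Rightarrow> 'a \<Rightarrow> bool) \<Rightarrow> bool" where
  "partial_order_on' S le \<longleftrightarrow>
     (\<forall>x\<in>S. le x x) \<and>
     (\<forall>x\<in>S. \<forall>y\<in>S. le x y \<and> le y x \<longrightarrow> x = y) \<and>
     (\<forall>x\<in>S. \<forall>y\<in>S. \<forall>z\<in>S. le x y \<and> le y z \<longrightarrow> le x z)"

definition directed_in :: "'a set \<Rightarrow> ('a \<Rightarrow> 'a \<Rightarrow> bool) \<Rightarrow> 'a set \<Rightarrow> bool" where
  "directed_in S le D \<longleftrightarrow> D \<subseteq> S \<and> D \<noteq> {} \<and>
     (\<forall>x\<in>D. \<forall>y\<in>D. \<exists>z\<in>D. le x z \<and> le y z)"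

definition filtered_in :: "'a set \<Rightarrow> ('a \<Rightarrow> 'a \<Rightarrow> bool) \<Rightarrow> 'a set \<Rightarrow> bool" where
  "filtered_in S le F \<longleftrightarrow> F \<subseteq> S \<and> F \<noteq> {} \<and>
     (\<forall>x\<in>F. \<forall>y\<in>F. \<exists>z\<in>F. le z x \<and> le z y)"

definition is_sup_in :: "'a set \<Rightarrow> ('a \<Rightarrow> 'a \<Rightarrow> bool) \<Rightarrow> 'a set \<Rightarrow> 'a \<Rightarrow> bool" where
  "is_sup_in S le D s \<longleftrightarrow> s \<in> S \<and> (\<forall>d\<in>D. le d s) \<and>
     (\<forall>u\<in>S. (\<forall>d\<in>D. le d u) \<longrightarrow> le s u)"

definition is_inf_in :: "'a set \<Rightarrow> ('a \<Rightarrow> 'a \<Rightarrow> bool) \<Rightarrow> 'a set \<Rightarrow> 'a \<Rightarrow> bool" where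
  "is_inf_in S le F s \<longleftrightarrow> s \<in> S \<and> (\<forall>d\<in>F. le s d) \<and>
     (\<forall>u\<in>S. (\<forall>d\<in>F. le u d) \<longrightarrow> le u s)"

definition way_below :: "'a set \<Rightarrow> ('a \<Rightarrow> 'a \<Rightarrow> bool) \<Rightarrow> 'a \<Rightarrow> 'a \<Rightarrow> bool" where
  "way_below S le x y \<longleftrightarrow>
     (\<forall>D s. directed_in S le D \<and> is_sup_in S le D s \<and> le y s \<longrightarrow> (\<exists>d\<in>D. le x d))"

definition way_below_set :: "'a set \<Rightarrow> ('a \<Rightarrow> 'a \<Rightarrow> bool) \<Rightarrow> 'a \<Rightarrow> 'a set" where
  "way_below_set S le x = {a\<in>S. way_below S le a x}"

definition way_above_set :: "'a set \<Rightarrow> ('a \<Rightarrow> 'a \<Rightarrow> bool) \<Rightarrow> 'a \<Rightarrow> 'a set" where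
  "way_above_set S le x = {a\<in>S. way_below S le x a}"

definition continuous_poset :: "'a set \<Rightarrow> ('a \<Rightarrow> 'a \<Rightarrow> bool) \<Rightarrow> bool" where
  "continuous_poset S le \<longleftrightarrow> partial_order_on' S le \<and>
     (\<exists>B\<subseteq>S. \<forall>x\<in>S. \<exists>D. D \<subseteq> B \<inter> way_below_set S le x \<and>
         directed_in S le D \<and> is_sup_in S le D x)"

definition domain_poset :: "'a set \<Rightarrow> ('a \<Rightarrow> 'a \<Rightarrow> bool) \<Rightarrow> bool" where
  "domain_poset S le \<longleftrightarrow> continuous_poset S le \<and>
     (\<forall>D. directed_in S le D \<longrightarrow> (\<exists>s. is_sup_in S le D s))"

definition bicontinuous_poset :: "'a set \<Rightarrow> ('a \<Rightarrow> 'a \<Rightarrow> bool) \<Rightarrow> bool" where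
  "bicontinuous_poset S le \<longleftrightarrow> continuous_poset S le \<and>
     (\<forall>x\<in>S. \<forall>y\<in>S. way_below S le x y \<longleftrightarrow>
        (\<forall>F i. filtered_in S le F \<and> is_inf_in S le F i \<and> le i x \<longrightarrow> (\<exists>s\<in>F. le s y))) \<and>
     (\<forall>x\<in>S. filtered_in S le (way_above_set S le x) \<and> is_inf_in S le (way_above_set S le x) x)"

definition interval_topology :: "'a set \<Rightarrow> ('a \<Rightarrow> 'a \<Rightarrow> bool) \<Rightarrow> 'a topology" where
  "interval_topology S le = topology_generated_by
     {{z\<in>S. way_below S le a z \<and> way_below S le z b} | a b. a \<in> S \<and> b \<in> S}"

definition closed_interval :: "'a set \<Rightarrow> ('a \<Rightarrow> 'a \<Rightarrow> bool) \<Rightarrow> 'a \<Rightarrow> 'a \<Rightarrow> 'a set" where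
  "closed_interval S le a b = {z\<in>S. le a z \<and> le z b}"

definition globally_hyperbolic :: "'a set \<Rightarrow> ('a \<Rightarrow> 'a \<Rightarrow> bool) \<Rightarrow> bool" where
  "globally_hyperbolic S le \<longleftrightarrow> bicontinuous_poset S le \<and>
     (\<forall>a\<in>S. \<forall>b\<in>S. compactin (interval_topology S le) (closed_interval S le a b))"

text \<open>Formal intervals: maps {1,2} \<rightarrow> X with x(1) \<le> x(2), represented as pairs (x(1), x(2)).\<close>
definition formal_intervals :: "'a set \<Rightarrow> ('a \<Rightarrow> 'a \<Rightarrow> bool) \<Rightarrow> ('a \<times> 'a) set" where
  "formal_intervals X le = {(a, b). a \<in> X \<and> b \<in> X \<and> le a b}"

definition formal_le :: "('a \<Rightarrow> 'a \<Rightarrow> bool) \<Rightarrow> 'a \<times> 'a \<Rightarrow> 'a \<times> 'a \<Rightarrow> bool" where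
  "formal_le le x y \<longleftrightarrow> le (fst x) (fst y) \<and> le (snd y) (snd x)"

definition interval_domain :: "'a set \<Rightarrow> ('a \<Rightarrow> 'a \<Rightarrow> bool) \<Rightarrow> 'a set set" where
  "interval_domain X le = {closed_interval X le a b | a b. a \<in> X \<and> b \<in> X \<and> le a b}"

definition order_isomorphic ::
  "'a set \<Rightarrow> ('a \<Rightarrow> 'a \<Rightarrow> bool) \<Rightarrow> 'b set \<Rightarrow> ('b \<Rightarrow> 'b \<Rightarrow> bool) \<Rightarrow> bool" where
  "order_isomorphic S le T le' \<longleftrightarrow>
     (\<exists>f. bij_betw f S T \<and> (\<forall>x\<in>S. \<forall>y\<in>S. le x y \<longleftrightarrow> le' (f x) (f y)))"

end

theory Submission
  imports Defs
begin

(* A directed set of formal intervals has a directed set of left endpoints and a filtered set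
   of right endpoints, every left endpoint lying below every right one.  So it suffices that in
   a globally hyperbolic poset directed sets bounded above have suprema (filtered sets bounded
   below are dual, the opposite of a globally hyperbolic poset being globally hyperbolic).  For
   a directed A bounded by b, compactness of [a, b] with a in A yields a point z whose every
   basic neighbourhood {w. p << w << q} meets every tail of A; since z is both the supremum of
   the elements way below it and the infimum of those way above it, z is the supremum of A.
   Suprema of formal intervals are then computed componentwise, (a, b) is way below (c, d)
   whenever a << c and d << b, and these intervals approximate (c, d).  The isomorphism with
   IX is (a, b) |-> [a, b]. *)

lemma directed_in_conversep: "directed_in S r\<inverse>\<inverse> D \<longleftrightarrow> filtered_in S r D"
  by (simp add: directed_in_def filtered_in_def)

lemma filtered_in_conversep: "filtered_in S r\<inverse>\<inverse> D \<longleftrightarrow> directed_in S r D"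
  by (simp add: directed_in_def filtered_in_def)

lemma is_sup_in_conversep: "is_sup_in S r\<inverse>\<inverse> D s \<longleftrightarrow> is_inf_in S r D s"
  by (simp add: is_sup_in_def is_inf_in_def)

lemma is_inf_in_conversep: "is_inf_in S r\<inverse>\<inverse> D s \<longleftrightarrow> is_sup_in S r D s"
  by (simp add: is_sup_in_def is_inf_in_def)

lemma directed_in_image:
  assumes "directed_in S r D" "f ` D \<subseteq> T" "\<And>x y. x \<in> D \<Longrightarrow> y \<in> D \<Longrightarrow> r x y \<Longrightarrow> r' (f x) (f y)"
  shows "directed_in T r' (f ` D)"
  unfolding directed_in_def
proof (intro conjI ballI)
  show "f ` D \<subseteq> T" "f ` D \<noteq> {}"
    using assms(1,2) unfolding directed_in_def by auto
next
  fix u v assume "u \<in> f ` D" "v \<in> f ` D"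
  then obtain x y where "x \<in> D" "y \<in> D" "u = f x" "v = f y"
    by blast
  then obtain z where "z \<in> D" "r x z" "r y z"
    using assms(1) unfolding directed_in_def by blast
  then show "\<exists>w\<in>f ` D. r' u w \<and> r' v w"
    using assms(3) \<open>x \<in> D\<close> \<open>y \<in> D\<close> \<open>u = f x\<close> \<open>v = f y\<close> by blast
qed

lemma way_belowD:
  assumes "way_below S le x y" "directed_in S le D" "is_sup_in S le D s" "le y s"
  shows "\<exists>d\<in>D. le x d"
  using assms unfolding way_below_def by blast

lemma openin_interval_topology_basis:
  assumes "a \<in> S" "b \<in> S"
  shows "openin (interval_topology S le) {z\<in>S. way_below S le a z \<and> way_below S le z b}"
  unfolding interval_topology_def by (rule topology_generated_by_Basis) (use assms in blast)

lemma compactin_cluster_point: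
  assumes "compactin T K"
    and "\<And>F. finite F \<Longrightarrow> F \<subseteq> A \<Longrightarrow> \<exists>y\<in>K. \<forall>x\<in>F. y \<in> S x"
  shows "\<exists>z\<in>K. \<forall>U. openin T U \<and> z \<in> U \<longrightarrow> (\<forall>x\<in>A. U \<inter> S x \<noteq> {})"
proof (rule ccontr)
  assume "\<not> ?thesis"
  then obtain U x where U: "\<And>z. z \<in> K \<Longrightarrow> openin T (U z) \<and> z \<in> U z \<and> x z \<in> A \<and> U z \<inter> S (x z) = {}"
    by metis
  then have "K \<subseteq> \<Union> (U ` K)" "\<forall>V \<in> U ` K. openin T V"
    by auto
  then obtain Z where Z: "finite Z" "Z \<subseteq> K" "K \<subseteq> \<Union> (U ` Z)"
    using assms(1) unfolding compactin_def by (metis finite_subset_image)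
  obtain y where "y \<in> K" "\<forall>z\<in>Z. y \<in> S (x z)"
    using assms(2)[of "x ` Z"] Z U by (auto simp: subset_iff)
  then show False
    using Z U by blast
qed

locale poset_on =
  fixes X :: "'a set" and le :: "'a \<Rightarrow> 'a \<Rightarrow> bool"
  assumes partial_order: "partial_order_on' X le"
begin

lemma poset_refl: "x \<in> X \<Longrightarrow> le x x"
  using partial_order unfolding partial_order_on'_def by blast

lemma poset_antisym: "x \<in> X \<Longrightarrow> y \<in> X \<Longrightarrow> le x y \<Longrightarrow> le y x \<Longrightarrow> x = y"
  using partial_order unfolding partial_order_on'_def by blast

lemma poset_trans: "x \<in> X \<Longrightarrow> y \<in> X \<Longrightarrow> z \<in> X \<Longrightarrow> le x y \<Longrightarrow> le y z \<Longrightarrow> le x z"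
  using partial_order unfolding partial_order_on'_def by blast

lemma conversep_poset: "poset_on X le\<inverse>\<inverse>"
  by unfold_locales (auto simp: partial_order_on'_def intro: poset_refl poset_antisym poset_trans)

lemma way_below_imp_le:
  assumes "y \<in> X" "way_below X le x y"
  shows "le x y"
proof -
  have "directed_in X le {y}" "is_sup_in X le {y} y"
    using assms(1) poset_refl unfolding directed_in_def is_sup_in_def by auto
  then show ?thesis
    using assms poset_refl unfolding way_below_def by blast
qed

lemma way_below_le_trans:
  assumes "c \<in> X" "s \<in> X" "way_below X le x c" "le c s"
  shows "way_below X le x s"
  using assms poset_trans unfolding way_below_def is_sup_in_def by blast

lemma directed_finite_upper_bound:
  assumes "directed_in X le A"
  shows "finite F \<Longrightarrow> F \<subseteq> A \<Longrightarrow> \<exists>y\<in>A. \<forall>x\<in>F. le x y"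
proof (induction F rule: finite_induct)
  case empty
  then show ?case
    using assms unfolding directed_in_def by auto
next
  case (insert x F)
  then obtain y where y: "y \<in> A" "\<forall>x\<in>F. le x y"
    by auto
  obtain z where z: "z \<in> A" "le x z" "le y z"
    using assms y insert.prems unfolding directed_in_def by blast
  have "A \<subseteq> X"
    using assms unfolding directed_in_def by blast
  then show ?case
    using z y insert.prems poset_trans by (metis insert_iff subset_iff)
qed

end

locale continuous_poset_on =
  fixes X :: "'a set" and le :: "'a \<Rightarrow> 'a \<Rightarrow> bool"
  assumes continuous: "continuous_poset X le"

sublocale continuous_poset_on \<subseteq> poset_on
  using continuous unfolding continuous_poset_def by unfold_locales blast

context continuous_poset_on
begin

lemma approximating_subset:
  assumes "x \<in> X"
  obtains D where "D \<subseteq> way_below_set X le x" "directed_in X le D" "is_sup_in X le D x"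
  using continuous assms unfolding continuous_poset_def by blast

lemma way_below_set_directed:
  assumes "x \<in> X"
  shows "directed_in X le (way_below_set X le x)"
proof -
  obtain D where D: "D \<subseteq> way_below_set X le x" "directed_in X le D" "is_sup_in X le D x"
    using approximating_subset assms by blast
  have DX: "D \<subseteq> X"
    using D(2) unfolding directed_in_def by blast
  have below_D: "\<exists>e\<in>D. le a e" if "a \<in> way_below_set X le x" for a
    using that D poset_refl[OF assms] unfolding way_below_set_def way_below_def by blast
  have "\<exists>c\<in>way_below_set X le x. le a c \<and> le b c"
    if ab: "a \<in> way_below_set X le x" "b \<in> way_below_set X le x" for a b
  proof -
    obtain e1 e2 where "e1 \<in> D" "le a e1" "e2 \<in> D" "le b e2"
      using below_D ab by blast
    moreover obtain e where "e \<in> D" "le e1 e" "le e2 e"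
      using D(2) \<open>e1 \<in> D\<close> \<open>e2 \<in> D\<close> unfolding directed_in_def by blast
    ultimately show ?thesis
      using ab D(1) DX poset_trans unfolding way_below_set_def by (metis (no_types, lifting) mem_Collect_eq subsetD)
  qed
  moreover have "way_below_set X le x \<noteq> {}"
    using D unfolding directed_in_def by blast
  ultimately show ?thesis
    unfolding directed_in_def way_below_set_def by blast
qed

lemma way_below_set_sup:
  assumes "x \<in> X"
  shows "is_sup_in X le (way_below_set X le x) x"
proof -
  obtain D where D: "D \<subseteq> way_below_set X le x" "is_sup_in X le D x"
    using approximating_subset assms by blast
  then show ?thesis
    using assms way_below_imp_le unfolding is_sup_in_def way_below_set_def by blast
qed

end

text \<open>z is a cluster point, in the interval topology, of the tails {y \<in> A. le x y} of A.\<close>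

definition net_cluster_point :: "'a set \<Rightarrow> ('a \<Rightarrow> 'a \<Rightarrow> bool) \<Rightarrow> 'a set \<Rightarrow> 'a \<Rightarrow> bool" where
  "net_cluster_point S le A z \<longleftrightarrow> z \<in> S \<and>
    (\<forall>x\<in>A. \<forall>a\<in>way_below_set S le z. \<forall>c\<in>way_above_set S le z.
      \<exists>y\<in>A. le x y \<and> way_below S le a y \<and> way_below S le y c)"

locale bicontinuous_poset_on =
  fixes X :: "'a set" and le :: "'a \<Rightarrow> 'a \<Rightarrow> bool"
  assumes bicontinuous: "bicontinuous_poset X le"

sublocale bicontinuous_poset_on \<subseteq> continuous_poset_on
  using bicontinuous unfolding bicontinuous_poset_def by unfold_locales blast

context bicontinuous_poset_on
begin

lemma way_below_iff_filtered:
  assumes "x \<in> X" "y \<in> X"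
  shows "way_below X le x y \<longleftrightarrow>
    (\<forall>F i. filtered_in X le F \<and> is_inf_in X le F i \<and> le i x \<longrightarrow> (\<exists>s\<in>F. le s y))"
  using bicontinuous assms unfolding bicontinuous_poset_def by blast

lemma way_above_set_filtered: "x \<in> X \<Longrightarrow> filtered_in X le (way_above_set X le x)"
  using bicontinuous unfolding bicontinuous_poset_def by blast

lemma way_above_set_inf: "x \<in> X \<Longrightarrow> is_inf_in X le (way_above_set X le x) x"
  using bicontinuous unfolding bicontinuous_poset_def by blast

lemma way_below_filteredD:
  assumes "x \<in> X" "y \<in> X" "way_below X le x y" "filtered_in X le F" "is_inf_in X le F i" "le i x"
  shows "\<exists>s\<in>F. le s y"
  using assms way_below_iff_filtered by blast

lemma way_below_conversep:
  assumes "x \<in> X" "y \<in> X"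
  shows "way_below X le\<inverse>\<inverse> x y \<longleftrightarrow> way_below X le y x"
  using way_below_iff_filtered[OF assms(2,1)]
  by (simp add: way_below_def directed_in_conversep is_sup_in_conversep)

lemma way_below_set_conversep: "x \<in> X \<Longrightarrow> way_below_set X le\<inverse>\<inverse> x = way_above_set X le x"
  by (auto simp: way_below_set_def way_above_set_def way_below_conversep)

lemma way_above_set_conversep: "x \<in> X \<Longrightarrow> way_above_set X le\<inverse>\<inverse> x = way_below_set X le x"
  by (auto simp: way_below_set_def way_above_set_def way_below_conversep)

lemma net_cluster_point_is_sup:
  assumes A: "directed_in X le A" and z: "net_cluster_point X le A z"
  shows "is_sup_in X le A z"
proof -
  have AX: "A \<subseteq> X"
    using A unfolding directed_in_def by blast
  have zX: "z \<in> X" and near: "\<And>x a c. x \<in> A \<Longrightarrow> a \<in> way_below_set X le z \<Longrightarrow>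
      c \<in> way_above_set X le z \<Longrightarrow> \<exists>y\<in>A. le x y \<and> way_below X le a y \<and> way_below X le y c"
    using z unfolding net_cluster_point_def by blast+
  have "le x z" if x: "x \<in> A" for x
  proof (rule ccontr)
    assume "\<not> le x z"
    then obtain c where c: "c \<in> way_above_set X le z" "\<not> le x c"
      using way_above_set_inf[OF zX] x AX unfolding is_inf_in_def by blast
    obtain a where "a \<in> way_below_set X le z"
      using way_below_set_directed[OF zX] unfolding directed_in_def by blast
    then obtain y where y: "y \<in> A" "le x y" "way_below X le y c"
      using near x c by blast
    have "c \<in> X"
      using c unfolding way_above_set_def by blast
    then show False
      using c y x AX way_below_imp_le poset_trans[of x y c] by blast
  qed
  moreover have "le z u" if u: "u \<in> X" "\<forall>x\<in>A. le x u" for u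
  proof (rule ccontr)
    assume "\<not> le z u"
    then obtain a where a: "a \<in> way_below_set X le z" "\<not> le a u"
      using way_below_set_sup[OF zX] u unfolding is_sup_in_def by blast
    obtain c where "c \<in> way_above_set X le z"
      using way_above_set_filtered[OF zX] unfolding filtered_in_def by blast
    moreover obtain x where "x \<in> A"
      using A unfolding directed_in_def by blast
    ultimately obtain y where y: "y \<in> A" "way_below X le a y"
      using near a by blast
    have "a \<in> X" "y \<in> X"
      using a y AX unfolding way_below_set_def by auto
    then show False
      using a u y way_below_imp_le poset_trans[of a y u] by blast
  qed
  ultimately show ?thesis
    using zX unfolding is_sup_in_def by blast
qed

text \<open>Bicontinuity is self-dual: the way-above sets witness continuity of the opposite order.\<close>

lemma conversep_bicontinuous: "bicontinuous_poset X le\<inverse>\<inverse>"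
proof -
  have "continuous_poset X le\<inverse>\<inverse>"
    unfolding continuous_poset_def
  proof (intro conjI)
    show "partial_order_on' X le\<inverse>\<inverse>"
      using poset_on.partial_order[OF conversep_poset] .
    have "way_above_set X le x \<subseteq> X \<inter> way_below_set X le\<inverse>\<inverse> x \<and>
        directed_in X le\<inverse>\<inverse> (way_above_set X le x) \<and> is_sup_in X le\<inverse>\<inverse> (way_above_set X le x) x"
      if "x \<in> X" for x
      using that way_above_set_filtered way_above_set_inf
      by (simp add: way_below_set_conversep directed_in_conversep is_sup_in_conversep)
        (auto simp: way_above_set_def)
    then show "\<exists>B\<subseteq>X. \<forall>x\<in>X. \<exists>D. D \<subseteq> B \<inter> way_below_set X le\<inverse>\<inverse> x \<and>
        directed_in X le\<inverse>\<inverse> D \<and> is_sup_in X le\<inverse>\<inverse> D x"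
      by blast
  qed
  moreover have "way_below X le\<inverse>\<inverse> x y \<longleftrightarrow>
      (\<forall>F i. filtered_in X le\<inverse>\<inverse> F \<and> is_inf_in X le\<inverse>\<inverse> F i \<and> le\<inverse>\<inverse> i x \<longrightarrow> (\<exists>s\<in>F. le\<inverse>\<inverse> s y))"
    if "x \<in> X" "y \<in> X" for x y
    using that by (simp add: way_below_conversep filtered_in_conversep is_inf_in_conversep)
      (simp add: way_below_def)
  ultimately show ?thesis
    unfolding bicontinuous_poset_def
    by (simp add: way_above_set_conversep filtered_in_conversep is_inf_in_conversep
        way_below_set_directed way_below_set_sup)
qed

end

locale globally_hyperbolic_on =
  fixes X :: "'a set" and le :: "'a \<Rightarrow> 'a \<Rightarrow> bool"
  assumes globally_hyperbolic: "globally_hyperbolic X le"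

sublocale globally_hyperbolic_on \<subseteq> bicontinuous_poset_on
  using globally_hyperbolic unfolding globally_hyperbolic_def by unfold_locales blast

context globally_hyperbolic_on
begin

lemma compactin_closed_interval:
  "a \<in> X \<Longrightarrow> b \<in> X \<Longrightarrow> compactin (interval_topology X le) (closed_interval X le a b)"
  using globally_hyperbolic unfolding globally_hyperbolic_def by blast

lemma interval_topology_conversep: "interval_topology X le\<inverse>\<inverse> = interval_topology X le"
proof -
  have "{z\<in>X. way_below X le\<inverse>\<inverse> a z \<and> way_below X le\<inverse>\<inverse> z b} =
      {z\<in>X. way_below X le b z \<and> way_below X le z a}" if "a \<in> X" "b \<in> X" for a b
    using that by (auto simp: way_below_conversep)
  then show ?thesis
    unfolding interval_topology_def by (metis (lifting))
qed

lemma conversep_globally_hyperbolic: "globally_hyperbolic X le\<inverse>\<inverse>"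
proof -
  have "closed_interval X le\<inverse>\<inverse> a b = closed_interval X le b a" for a b
    by (auto simp: closed_interval_def)
  then show ?thesis
    unfolding globally_hyperbolic_def interval_topology_conversep
    using conversep_bicontinuous compactin_closed_interval by simp
qed

lemma directed_bounded_has_net_cluster_point:
  assumes A: "directed_in X le A" and b: "b \<in> X" "\<forall>x\<in>A. le x b"
  obtains z where "net_cluster_point X le A z"
proof -
  obtain a0 where a0: "a0 \<in> A"
    using A unfolding directed_in_def by blast
  have AX: "A \<subseteq> X"
    using A unfolding directed_in_def by blast
  have a0X: "a0 \<in> X"
    using a0 AX by blast
  let ?K = "closed_interval X le a0 b"
  have "\<exists>y\<in>?K. \<forall>x\<in>F. y \<in> {y\<in>A. le x y}" if F: "finite F" "F \<subseteq> A" for F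
  proof -
    obtain y where y: "y \<in> A" "\<forall>x\<in>insert a0 F. le x y"
      using directed_finite_upper_bound[OF A, of "insert a0 F"] F a0 by auto
    then have "y \<in> ?K"
      using b AX unfolding closed_interval_def by auto
    then show ?thesis
      using y by auto
  qed
  then obtain z where z: "z \<in> ?K"
    and cluster: "\<forall>U. openin (interval_topology X le) U \<and> z \<in> U \<longrightarrow> (\<forall>x\<in>A. U \<inter> {y\<in>A. le x y} \<noteq> {})"
    using compactin_cluster_point[OF compactin_closed_interval[OF a0X b(1)], of A "\<lambda>x. {y\<in>A. le x y}"]
    by blast
  have zX: "z \<in> X"
    using z unfolding closed_interval_def by blast
  have near: "\<exists>y\<in>A. le x y \<and> way_below X le a y \<and> way_below X le y c"
    if "x \<in> A" "a \<in> way_below_set X le z" "c \<in> way_above_set X le z" for x a c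
  proof -
    let ?U = "{w\<in>X. way_below X le a w \<and> way_below X le w c}"
    have "openin (interval_topology X le) ?U" "z \<in> ?U"
      using that zX openin_interval_topology_basis unfolding way_below_set_def way_above_set_def by auto
    then have "?U \<inter> {y\<in>A. le x y} \<noteq> {}"
      using cluster that(1) by blast
    then show ?thesis
      by blast
  qed
  show thesis
    by (rule that) (unfold net_cluster_point_def, use zX near in blast)
qed

lemma directed_bounded_has_sup:
  assumes "directed_in X le A" "b \<in> X" "\<forall>x\<in>A. le x b"
  shows "\<exists>s. is_sup_in X le A s"
  using directed_bounded_has_net_cluster_point[OF assms] net_cluster_point_is_sup[OF assms(1)] by blast

lemma filtered_bounded_has_inf:
  assumes "filtered_in X le B" "a \<in> X" "\<forall>x\<in>B. le a x"
  shows "\<exists>i. is_inf_in X le B i"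
proof -
  interpret dual: globally_hyperbolic_on X "le\<inverse>\<inverse>"
    by unfold_locales (rule conversep_globally_hyperbolic)
  show ?thesis
    using dual.directed_bounded_has_sup[of B a] assms
    by (simp add: directed_in_conversep is_sup_in_conversep)
qed

end

context poset_on
begin

lemma formal_intervals_iff [simp]: "(a, b) \<in> formal_intervals X le \<longleftrightarrow> a \<in> X \<and> b \<in> X \<and> le a b"
  unfolding formal_intervals_def by simp

lemma formal_intervals_partial_order: "partial_order_on' (formal_intervals X le) (formal_le le)"
  unfolding partial_order_on'_def formal_le_def
  by (auto intro: poset_refl poset_antisym poset_trans prod_eqI)

lemma closed_interval_subset_iff:
  assumes "a \<in> X" "b \<in> X" "c \<in> X" "d \<in> X" "le c d"
  shows "closed_interval X le c d \<subseteq> closed_interval X le a b \<longleftrightarrow> le a c \<and> le d b"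
proof
  assume "closed_interval X le c d \<subseteq> closed_interval X le a b"
  moreover have "c \<in> closed_interval X le c d" "d \<in> closed_interval X le c d"
    using assms poset_refl unfolding closed_interval_def by auto
  ultimately show "le a c \<and> le d b"
    unfolding closed_interval_def by auto
next
  assume "le a c \<and> le d b"
  then show "closed_interval X le c d \<subseteq> closed_interval X le a b"
    using assms poset_trans unfolding closed_interval_def by blast
qed

lemma formal_intervals_order_isomorphic:
  "order_isomorphic (formal_intervals X le) (formal_le le) (interval_domain X le) (\<lambda>A B. B \<subseteq> A)"
  unfolding order_isomorphic_def
proof (intro exI conjI)
  have sub_iff: "formal_le le p q \<longleftrightarrow> case_prod (closed_interval X le) q \<subseteq> case_prod (closed_interval X le) p"
    if "p \<in> formal_intervals X le" "q \<in> formal_intervals X le" for p q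
    using that closed_interval_subset_iff by (cases p, cases q) (simp add: formal_le_def)
  then show "\<forall>p\<in>formal_intervals X le. \<forall>q\<in>formal_intervals X le.
      formal_le le p q \<longleftrightarrow> case_prod (closed_interval X le) q \<subseteq> case_prod (closed_interval X le) p"
    by (intro ballI)
  have "inj_on (case_prod (closed_interval X le)) (formal_intervals X le)"
  proof (rule inj_onI, clarify)
    fix a b c d
    assume ab: "(a, b) \<in> formal_intervals X le" and cd: "(c, d) \<in> formal_intervals X le"
      and "closed_interval X le a b = closed_interval X le c d"
    then have "formal_le le (a, b) (c, d)" "formal_le le (c, d) (a, b)"
      using sub_iff by auto
    then show "a = c \<and> b = d"
      using ab cd poset_antisym unfolding formal_le_def by auto
  qed
  moreover have "case_prod (closed_interval X le) ` formal_intervals X le = interval_domain X le"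
    unfolding interval_domain_def formal_intervals_def by force
  ultimately show "bij_betw (case_prod (closed_interval X le)) (formal_intervals X le) (interval_domain X le)"
    unfolding bij_betw_def ..
qed

lemma directed_formal_intervals_fst:
  assumes D: "directed_in (formal_intervals X le) (formal_le le) D"
  shows "directed_in X le (fst ` D)"
proof (rule directed_in_image[OF D])
  show "fst ` D \<subseteq> X"
    using D unfolding directed_in_def formal_intervals_def by auto
qed (simp add: formal_le_def)

lemma directed_formal_intervals_snd:
  assumes D: "directed_in (formal_intervals X le) (formal_le le) D"
  shows "filtered_in X le (snd ` D)"
  unfolding directed_in_conversep[symmetric]
proof (rule directed_in_image[OF D])
  show "snd ` D \<subseteq> X"
    using D unfolding directed_in_def formal_intervals_def by auto
qed (simp add: formal_le_def)

lemma directed_formal_intervals_fst_le_snd: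
  assumes D: "directed_in (formal_intervals X le) (formal_le le) D" and "p \<in> D" "q \<in> D"
  shows "le (fst p) (snd q)"
proof -
  obtain r where r: "r \<in> D" "formal_le le p r" "formal_le le q r"
    using D assms(2,3) unfolding directed_in_def by blast
  have "p \<in> formal_intervals X le" "q \<in> formal_intervals X le" "r \<in> formal_intervals X le"
    using D assms(2,3) r(1) unfolding directed_in_def by auto
  then have "fst p \<in> X" "fst r \<in> X" "snd r \<in> X" "snd q \<in> X" "le (fst r) (snd r)"
    unfolding formal_intervals_def by auto
  moreover have "le (fst p) (fst r)" "le (snd r) (snd q)"
    using r(2,3) unfolding formal_le_def by auto
  ultimately show ?thesis
    using poset_trans by metis
qed

lemma is_sup_in_formal_intervalsI:
  assumes "D \<subseteq> formal_intervals X le" "is_sup_in X le (fst ` D) s" "is_inf_in X le (snd ` D) t" "le s t"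
  shows "is_sup_in (formal_intervals X le) (formal_le le) D (s, t)"
  unfolding is_sup_in_def
proof (intro conjI ballI allI impI)
  show "(s, t) \<in> formal_intervals X le"
    using assms(2-4) unfolding is_sup_in_def is_inf_in_def by simp
  show "formal_le le p (s, t)" if "p \<in> D" for p
    using assms(2,3) that unfolding is_sup_in_def is_inf_in_def formal_le_def by simp
  show "formal_le le (s, t) u" if "u \<in> formal_intervals X le" "\<forall>p\<in>D. formal_le le p u" for u
    using assms(2,3) that unfolding is_sup_in_def is_inf_in_def formal_le_def formal_intervals_def
    by auto
qed

lemma way_below_set_Times_way_above_set_subset:
  assumes "c \<in> X" "d \<in> X" "le c d"
  shows "way_below_set X le c \<times> way_above_set X le d \<subseteq> formal_intervals X le"
proof clarify
  fix a b assume "a \<in> way_below_set X le c" "b \<in> way_above_set X le d"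
  then have "a \<in> X" "b \<in> X" "le a c" "le d b"
    using assms way_below_imp_le unfolding way_below_set_def way_above_set_def by auto
  then have "le a b"
    using assms poset_trans by metis
  then show "(a, b) \<in> formal_intervals X le"
    using \<open>a \<in> X\<close> \<open>b \<in> X\<close> by simp
qed

lemma directed_in_formal_intervals_Times:
  assumes A: "directed_in X le A" and B: "filtered_in X le B" and AB: "A \<times> B \<subseteq> formal_intervals X le"
  shows "directed_in (formal_intervals X le) (formal_le le) (A \<times> B)"
  unfolding directed_in_def
proof (intro conjI ballI)
  show "A \<times> B \<noteq> {}"
    using A B unfolding directed_in_def filtered_in_def by blast
  fix p q assume "p \<in> A \<times> B" "q \<in> A \<times> B"
  then obtain a b where "a \<in> A" "le (fst p) a" "le (fst q) a" "b \<in> B" "le b (snd p)" "le b (snd q)"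
    using A B unfolding directed_in_def filtered_in_def by (metis mem_Times_iff)
  then show "\<exists>r\<in>A \<times> B. formal_le le p r \<and> formal_le le q r"
    unfolding formal_le_def by (intro bexI[of _ "(a, b)"]) auto
qed (rule AB)

end

context globally_hyperbolic_on
begin

lemma formal_intervals_directed_sup:
  assumes D: "directed_in (formal_intervals X le) (formal_le le) D"
  obtains s t where "is_sup_in X le (fst ` D) s" "is_inf_in X le (snd ` D) t"
    "is_sup_in (formal_intervals X le) (formal_le le) D (s, t)"
proof -
  have DI: "D \<subseteq> formal_intervals X le"
    using D unfolding directed_in_def by blast
  obtain p0 where p0: "p0 \<in> D"
    using D unfolding directed_in_def by blast
  have p0X: "fst p0 \<in> X" "snd p0 \<in> X"
    using p0 DI unfolding formal_intervals_def by auto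
  have fst_le_snd: "\<forall>x\<in>fst ` D. le x y" if "y \<in> snd ` D" for y
    using that directed_formal_intervals_fst_le_snd[OF D] by blast
  obtain s where s: "is_sup_in X le (fst ` D) s"
    using directed_bounded_has_sup[OF directed_formal_intervals_fst[OF D] p0X(2)] fst_le_snd p0 by blast
  obtain t where t: "is_inf_in X le (snd ` D) t"
    using filtered_bounded_has_inf[OF directed_formal_intervals_snd[OF D] p0X(1)]
      directed_formal_intervals_fst_le_snd[OF D p0] by blast
  have "\<forall>y\<in>snd ` D. le s y"
    using s fst_le_snd directed_formal_intervals_snd[OF D] unfolding is_sup_in_def filtered_in_def by blast
  then have "le s t"
    using s t unfolding is_sup_in_def is_inf_in_def by blast
  then show thesis
    using that s t is_sup_in_formal_intervalsI[OF DI s t] by blast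
qed

lemma way_below_formal_intervalsI:
  assumes X: "a \<in> X" "b \<in> X" "c \<in> X" "d \<in> X" and ac: "way_below X le a c" and db: "way_below X le d b"
  shows "way_below (formal_intervals X le) (formal_le le) (a, b) (c, d)"
  unfolding way_below_def
proof (intro allI impI, elim conjE)
  fix D p
  assume D: "directed_in (formal_intervals X le) (formal_le le) D"
    and p: "is_sup_in (formal_intervals X le) (formal_le le) D p" and cdp: "formal_le le (c, d) p"
  obtain s t where s: "is_sup_in X le (fst ` D) s" and t: "is_inf_in X le (snd ` D) t"
    and st: "is_sup_in (formal_intervals X le) (formal_le le) D (s, t)"
    using formal_intervals_directed_sup[OF D] by blast
  have "formal_le le p (s, t)"
    using p st unfolding is_sup_in_def by blast
  then have "le c (fst p)" "le (fst p) s" "le t (snd p)" "le (snd p) d"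
    using cdp unfolding formal_le_def by auto
  moreover have "fst p \<in> X" "snd p \<in> X" "s \<in> X" "t \<in> X"
    using p s t unfolding is_sup_in_def is_inf_in_def formal_intervals_def by auto
  ultimately have "le c s" "le t d"
    using X(3,4) poset_trans by blast+
  then obtain p1 where p1: "p1 \<in> D" "le a (fst p1)"
    using way_belowD[OF way_below_le_trans[OF X(3) \<open>s \<in> X\<close> ac] directed_formal_intervals_fst[OF D] s
        poset_refl[OF \<open>s \<in> X\<close>]] by blast
  obtain p2 where p2: "p2 \<in> D" "le (snd p2) b"
    using way_below_filteredD[OF X(4,2) db directed_formal_intervals_snd[OF D] t \<open>le t d\<close>] by blast
  obtain r where r: "r \<in> D" "formal_le le p1 r" "formal_le le p2 r"
    using D p1 p2 unfolding directed_in_def by blast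
  have "fst p1 \<in> X" "fst r \<in> X" "snd p2 \<in> X" "snd r \<in> X"
    using D p1 p2 r unfolding directed_in_def formal_intervals_def by auto
  moreover have "le (fst p1) (fst r)" "le (snd r) (snd p2)"
    using r unfolding formal_le_def by auto
  ultimately have "le a (fst r)" "le (snd r) b"
    using X(1,2) p1 p2 poset_trans by blast+
  then show "\<exists>r\<in>D. formal_le le (a, b) r"
    using r(1) unfolding formal_le_def by auto
qed

lemma formal_intervals_approximants:
  assumes p: "p \<in> formal_intervals X le"
  defines "D \<equiv> way_below_set X le (fst p) \<times> way_above_set X le (snd p)"
  shows "D \<subseteq> way_below_set (formal_intervals X le) (formal_le le) p"
    and "directed_in (formal_intervals X le) (formal_le le) D"
    and "is_sup_in (formal_intervals X le) (formal_le le) D p"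
proof -
  obtain c d where cd: "p = (c, d)" "c \<in> X" "d \<in> X" "le c d"
    using p unfolding formal_intervals_def by blast
  have DI: "D \<subseteq> formal_intervals X le"
    unfolding D_def cd using way_below_set_Times_way_above_set_subset[OF cd(2-4)] by simp
  show "D \<subseteq> way_below_set (formal_intervals X le) (formal_le le) p"
    using DI way_below_formal_intervalsI cd unfolding D_def way_below_set_def way_above_set_def by auto
  show "directed_in (formal_intervals X le) (formal_le le) D"
    unfolding D_def using directed_in_formal_intervals_Times way_below_set_directed way_above_set_filtered
      DI[unfolded D_def] cd by simp
  have "way_below_set X le c \<noteq> {}" "way_above_set X le d \<noteq> {}"
    using way_below_set_directed[OF cd(2)] way_above_set_filtered[OF cd(3)]
    unfolding directed_in_def filtered_in_def by auto
  then have "fst ` D = way_below_set X le c" "snd ` D = way_above_set X le d"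
    unfolding D_def cd by auto
  then show "is_sup_in (formal_intervals X le) (formal_le le) D p"
    using is_sup_in_formal_intervalsI[OF DI] way_below_set_sup[OF cd(2)] way_above_set_inf[OF cd(3)] cd
    by simp
qed

lemma formal_intervals_continuous: "continuous_poset (formal_intervals X le) (formal_le le)"
proof -
  have "\<exists>D. D \<subseteq> formal_intervals X le \<inter> way_below_set (formal_intervals X le) (formal_le le) p \<and>
      directed_in (formal_intervals X le) (formal_le le) D \<and> is_sup_in (formal_intervals X le) (formal_le le) D p"
    if "p \<in> formal_intervals X le" for p
    using formal_intervals_approximants[OF that] unfolding way_below_set_def by blast
  then show ?thesis
    unfolding continuous_poset_def using formal_intervals_partial_order by blast
qed

end

theorem mainTheorem4:
  fixes X :: "'a set" and le :: "'a \<Rightarrow> 'a \<Rightarrow> bool"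
  assumes "globally_hyperbolic X le"
  shows "domain_poset (formal_intervals X le) (formal_le le)
       \<and> order_isomorphic (formal_intervals X le) (formal_le le)
           (interval_domain X le) (\<lambda>A B. B \<subseteq> A)"
proof -
  interpret globally_hyperbolic_on X le
    by unfold_locales (rule assms)
  have "\<exists>s. is_sup_in (formal_intervals X le) (formal_le le) D s"
    if "directed_in (formal_intervals X le) (formal_le le) D" for D
    using formal_intervals_directed_sup[OF that] by metis
  then show ?thesis
    unfolding domain_poset_def using formal_intervals_continuous formal_intervals_order_isomorphic by blast
qed

end
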